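(* Let $\alpha>-1$, $\beta<1$, $\gamma\in(0,1)$ with $(2+\alpha-\beta)\gamma\neq 1-\beta$, and let $\delta\in(0,\pi)$. Let $T_{\alpha,\beta,\gamma,\delta}$ be the self-adjoint operator in $L^2((0,\infty);x^\alpha dx)$ given by $T_{\alpha,\beta,\gamma,\delta}f=\tau_{\alpha,\beta,\gamma}f$ on \[ \operatorname{dom}(T_{\alpha,\beta,\gamma,\delta})=\big\{g\in\operatorname{dom}(T_{\alpha,\beta,\gamma,max})\,\big|\,\sin(\delta)\,\widetilde g^{\,\prime}(0)+\cos(\delta)\,\widetilde g(0)=0\big\}. \] Then there exists $f\in\operatorname{dom}(T_{\alpha,\beta,\gamma,\delta})$ (indeed one of the form $f=(T_{\alpha,\beta,\gamma,\delta}-zI)^{-1}g$ with $z\in\mathbb{C}\setminus\mathbb{R}$ and $g\in L^2((0,\infty);x^\alpha dx)$ compactly supported in $(0,\infty)$) such that \[ \lim_{\varepsilon\downarrow0}\int_\varepsilon^\infty dx\,x^\beta|f'(x)|^2=\infty \quad\text{and}\quad \lim_{\varepsilon\downarrow0}\int_\varepsilon^\infty dx\,x^{\beta-2}|f(x)|^2=\infty. \] In particular, the inequality of the form $\int_0^\infty [x^\beta|f'|^2 + \tfrac14((2+\alpha-\beta)^2\gamma^2-(1-\beta)^2)x^{\beta-2}|f|^2]\,dx \le \|f\|\,\|\tau_{\alpha,\beta,\gamma}f\|$ (norms in $L^2((0,\infty);x^\alpha dx)$), valid on the domain of the Friedrichs extension, does not extend to $\operatorname{dom}(T_{\alpha,\beta,\gamma,\delta})$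 for any $\delta\in(0,\pi)$.
   Context: For $\alpha>-1$, $\beta<1$, $\gamma\in(0,1)$ define the differential expression \[ \tau_{\alpha,\beta,\gamma} = x^{-\alpha}\Big[-\frac{d}{dx}x^{\beta}\frac{d}{dx} + \frac{(2+\alpha-\beta)^2\gamma^2-(1-\beta)^2}{4}x^{\beta-2}\Big],\quad x\in(0,\infty). \] The maximal operator $T_{\alpha,\beta,\gamma,max}$ in $L^2((0,\infty);x^\alpha dx)$ is $T_{\alpha,\beta,\gamma,max}f=\tau_{\alpha,\beta,\gamma}f$ with domain $\{g\in L^2((0,\infty);x^\alpha dx)\,|\, g, x^\beta g'\in AC_{loc}((0,\infty)),\ \tau_{\alpha,\beta,\gamma}g\in L^2((0,\infty);x^\alpha dx)\}$. For $g\in\operatorname{dom}(T_{\alpha,\beta,\gamma,max})$ the generalized boundary values \[ \widetilde g(0)=\lim_{x\downarrow0} \frac{g(x)}{(1-\beta)[(2+\alpha-\beta)\gamma]^{-1}x^{[1-\beta-(2+\alpha-\beta)\gamma]/2}}, \] \[ \widetilde g^{\,\prime}(0)=\lim_{x\downarrow0}\frac{g(x)-\widetilde g(0)(1-\beta)[(2+\alpha-\beta)\gamma]^{-1}x^{[1-\beta-(2+\alpha-\beta)\gamma]/2}}{(1-\beta)^{-1}x^{[1-\beta+(2+\alpha-\beta)\gamma]/2}} \] exist. For $\delta\in[0,\pi)$ these boundary conditions yield all self-adjoint extensions of $T_{\alpha,\beta,\gamma,max}^*$; $\delta=0$ is the Friedrichs extension. *)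

theory Defs
  imports "HOL-Analysis.Analysis"
begin

definition L2w :: "real \<Rightarrow> (real \<Rightarrow> complex) \<Rightarrow> bool" where
  "L2w \<alpha> g \<longleftrightarrow> set_borel_measurable lborel {0<..} g \<and>
     set_integrable lborel {0<..} (\<lambda>x. x powr \<alpha> * (cmod (g x))\<^sup>2)"

text \<open>ACloc g h: g is locally absolutely continuous on (0,infinity) with
  (a.e.) derivative h, i.e. h is integrable on compact subintervals and
  g b - g a is the integral of h over [a,b].\<close>
definition ACloc :: "(real \<Rightarrow> complex) \<Rightarrow> (real \<Rightarrow> complex) \<Rightarrow> bool" where
  "ACloc g h \<longleftrightarrow> (\<forall>a b. 0 < a \<longrightarrow> a \<le> b \<longrightarrow>
      set_integrable lborel {a..b} h \<and> g b - g a = (LINT x:{a..b}|lborel. h x))"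

definition qcoef :: "real \<Rightarrow> real \<Rightarrow> real \<Rightarrow> real" where
  "qcoef \<alpha> \<beta> \<gamma> = ((2 + \<alpha> - \<beta>)\<^sup>2 * \<gamma>\<^sup>2 - (1 - \<beta>)\<^sup>2) / 4"

text \<open>tau g, where k is the derivative of the quasi-derivative x^beta g'.\<close>
definition tau :: "real \<Rightarrow> real \<Rightarrow> real \<Rightarrow> (real \<Rightarrow> complex) \<Rightarrow> (real \<Rightarrow> complex) \<Rightarrow> real \<Rightarrow> complex" where
  "tau \<alpha> \<beta> \<gamma> g k x = complex_of_real (x powr (- \<alpha>)) *
      (- k x + complex_of_real (qcoef \<alpha> \<beta> \<gamma> * x powr (\<beta> - 2)) * g x)"

text \<open>g in dom(T_max), with g' a derivative of g such that x^beta g' is locally AC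
  with derivative k (so that tau g = tau \<alpha> \<beta> \<gamma> g k).\<close>
definition dmax :: "real \<Rightarrow> real \<Rightarrow> real \<Rightarrow> (real \<Rightarrow> complex) \<Rightarrow> (real \<Rightarrow> complex) \<Rightarrow> (real \<Rightarrow> complex) \<Rightarrow> bool" where
  "dmax \<alpha> \<beta> \<gamma> g g' k \<longleftrightarrow> L2w \<alpha> g \<and> ACloc g g' \<and>
     ACloc (\<lambda>x. complex_of_real (x powr \<beta>) * g' x) k \<and> L2w \<alpha> (tau \<alpha> \<beta> \<gamma> g k)"

text \<open>Principal / non-principal comparison functions for the generalized boundary values.\<close>
definition phi0 :: "real \<Rightarrow> real \<Rightarrow> real \<Rightarrow> real \<Rightarrow> real" where
  "phi0 \<alpha> \<beta> \<gamma> x = (1 - \<beta>) / ((2 + \<alpha> - \<beta>) * \<gamma>) *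
      x powr ((1 - \<beta> - (2 + \<alpha> - \<beta>) * \<gamma>) / 2)"

definition phi1 :: "real \<Rightarrow> real \<Rightarrow> real \<Rightarrow> real \<Rightarrow> real" where
  "phi1 \<alpha> \<beta> \<gamma> x = inverse (1 - \<beta>) * x powr ((1 - \<beta> + (2 + \<alpha> - \<beta>) * \<gamma>) / 2)"

text \<open>g in dom(T_{alpha,beta,gamma,delta}): the generalized boundary values
  gt0 = g~(0) and gt1 = g~'(0) exist and satisfy the boundary condition.\<close>
definition ddelta :: "real \<Rightarrow> real \<Rightarrow> real \<Rightarrow> real \<Rightarrow> (real \<Rightarrow> complex) \<Rightarrow> (real \<Rightarrow> complex) \<Rightarrow> (real \<Rightarrow> complex) \<Rightarrow> bool" where
  "ddelta \<alpha> \<beta> \<gamma> \<delta> g g' k \<longleftrightarrow> dmax \<alpha> \<beta> \<gamma> g g' k \<and>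
     (\<exists>gt0 gt1.
        ((\<lambda>x. g x / complex_of_real (phi0 \<alpha> \<beta> \<gamma> x)) \<longlongrightarrow> gt0) (at_right 0) \<and>
        ((\<lambda>x. (g x - gt0 * complex_of_real (phi0 \<alpha> \<beta> \<gamma> x)) / complex_of_real (phi1 \<alpha> \<beta> \<gamma> x))
            \<longlongrightarrow> gt1) (at_right 0) \<and>
        complex_of_real (sin \<delta>) * gt1 + complex_of_real (cos \<delta>) * gt0 = 0)"

end

(* Near 0 the equation tau u = z u has the Frobenius solutions x^s0 P0(x^m) and x^s1 P1(x^m), where
   m = 2 + alpha - beta, nu = m gamma, s0 = (1 - beta - nu)/2, s1 = (1 - beta + nu)/2 and P0, P1 are
   entire with P0(0) = P1(0) = 1.  For delta in (0, pi) the boundary condition requires a nonzero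
   multiple sin delta of the non-principal solution x^s0.  A solution of tau f = i f satisfying it,
   multiplied by a smooth cutoff that is 1 on (0, 1] and 0 on [2, oo), lies in the domain of the
   extension, and (tau - i) f is supported in [1, 2].  As f ~ A x^s0 and f' ~ A s0 x^(s0 - 1) with
   A s0 ~= 0 and beta - 2 + 2 s0 = -1 - nu < -1, both integrals diverge at 0, whereas
   alpha + 2 s0 > -1 keeps f in L^2(x^alpha dx). *)

theory Submission
  imports Defs "HOL-Real_Asymp.Real_Asymp"
begin

section \<open>Entire power series\<close>

lemma tendsto_of_real_powr_at_right_0:
  assumes "a > 0"
  shows "((\<lambda>x. complex_of_real (x powr a)) \<longlongrightarrow> 0) (at_right 0)"
proof -
  have "((\<lambda>x::real. x powr a) \<longlongrightarrow> 0) (at_right 0)"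
    using assms by real_asymp
  from tendsto_of_real[OF this] show ?thesis by simp
qed

definition pseries :: "(nat \<Rightarrow> complex) \<Rightarrow> complex \<Rightarrow> complex" where
  "pseries c y = (\<Sum>n. c n * y ^ n)"

definition entire_coeffs :: "(nat \<Rightarrow> complex) \<Rightarrow> bool" where
  "entire_coeffs c \<longleftrightarrow> (\<forall>y. summable (\<lambda>n. c n * y ^ n))"

lemma entire_coeffs_diffs: "entire_coeffs c \<Longrightarrow> entire_coeffs (diffs c)"
  unfolding entire_coeffs_def by (blast intro: termdiff_converges_all)

lemma entire_coeffs_shift: "entire_coeffs c \<Longrightarrow> entire_coeffs (\<lambda>n. c (Suc n))"
  unfolding entire_coeffs_def by (blast intro: powser_split_head(3))

lemma pseries_split_head: "entire_coeffs c \<Longrightarrow> pseries c y = c 0 + y * pseries (\<lambda>n. c (Suc n)) y"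
  unfolding entire_coeffs_def pseries_def by (subst powser_split_head(1)) (simp_all add: mult.commute)

lemma pseries_has_field_derivative:
  "entire_coeffs c \<Longrightarrow> (pseries c has_field_derivative pseries (diffs c) y) (at y)"
  unfolding entire_coeffs_def pseries_def[abs_def]
  by (blast intro: termdiffs_strong_converges_everywhere)

lemma pseries_tendsto_at_right_0:
  assumes "entire_coeffs c" and "m > 0"
  shows "((\<lambda>x. pseries c (of_real (x powr m))) \<longlongrightarrow> c 0) (at_right 0)"
proof -
  have "isCont (pseries c) 0"
    using assms(1) unfolding entire_coeffs_def pseries_def[abs_def]
    by (blast intro: isCont_powser_converges_everywhere)
  with tendsto_of_real_powr_at_right_0[OF assms(2)] show ?thesis
    using isCont_tendsto_compose by (fastforce simp: pseries_def)
qed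

lemma has_vector_derivative_powr_pseries:
  fixes x r m :: real
  assumes c: "entire_coeffs c" and x: "x > 0"
  shows "((\<lambda>x. of_real (x powr r) * pseries c (of_real (x powr m))) has_vector_derivative
           of_real (x powr (r - 1)) * (of_real r * pseries c (of_real (x powr m))
             + of_real m * of_real (x powr m) * pseries (diffs c) (of_real (x powr m)))) (at x)"
proof -
  have powr: "((\<lambda>x. complex_of_real (x powr a)) has_vector_derivative of_real (a * x powr (a - 1))) (at x)" for a
    using x by (intro has_vector_derivative_of_real has_real_derivative_powr)
  have "((\<lambda>x. pseries c (of_real (x powr m))) has_vector_derivative
      of_real (m * x powr (m - 1)) * pseries (diffs c) (of_real (x powr m))) (at x)"
    using field_vector_diff_chain_at[OF powr pseries_has_field_derivative[OF c]] by (simp add: o_def)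
  note deriv = has_vector_derivative_mult[OF powr this]
  have "x powr r * x powr (m - 1) = x powr (r - 1) * x powr m"
    by (simp add: powr_add[symmetric] add_diff_eq diff_add_eq)
  then have e: "complex_of_real (x powr r) * of_real (m * x powr (m - 1))
      = of_real (x powr (r - 1)) * (of_real m * of_real (x powr m))"
    by (metis mult.left_commute of_real_mult)
  show ?thesis
  proof (rule has_vector_derivative_eq_rhs[OF deriv])
    let ?P0 = "pseries c (of_real (x powr m))" and ?P1 = "pseries (diffs c) (of_real (x powr m))"
    have "of_real (x powr r) * (of_real (m * x powr (m - 1)) * ?P1) + of_real (r * x powr (r - 1)) * ?P0
        - of_real (x powr (r - 1)) * (of_real r * ?P0 + of_real m * of_real (x powr m) * ?P1)
      = ?P1 * (complex_of_real (x powr r) * of_real (m * x powr (m - 1))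
          - of_real (x powr (r - 1)) * (of_real m * of_real (x powr m)))"
      by (simp add: algebra_simps)
    then show "of_real (x powr r) * (of_real (m * x powr (m - 1)) * ?P1) + of_real (r * x powr (r - 1)) * ?P0
      = of_real (x powr (r - 1)) * (of_real r * ?P0 + of_real m * of_real (x powr m) * ?P1)"
      unfolding e by simp
  qed
qed

section \<open>Frobenius solutions\<close>

(* With m = 2 + alpha - beta and 2 s = 1 - beta + mu, the function u(x) = x^s P(x^m) solves
   -(x^beta u')' + (mu^2 - (1 - beta)^2)/4 x^(beta - 2) u = z x^alpha u exactly when
   m^2 y P''(y) + m (m + mu) P'(y) + z P(y) = 0; this is the recursion for the coefficients of P. *)
fun frob_coeff :: "real \<Rightarrow> real \<Rightarrow> complex \<Rightarrow> nat \<Rightarrow> complex" where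
  "frob_coeff m \<mu> z 0 = 1"
| "frob_coeff m \<mu> z (Suc n) =
     - z * frob_coeff m \<mu> z n / of_real (real (Suc n) * m * (real (Suc n) * m + \<mu>))"

lemma entire_frob_coeff:
  assumes m: "m > 0" and mu: "\<mu> > - m"
  shows "entire_coeffs (frob_coeff m \<mu> z)"
  unfolding entire_coeffs_def
proof
  fix y
  obtain N :: nat where N: "2 * cmod z * cmod y / m^2 \<le> real N"
    using real_arch_simple by blast
  show "summable (\<lambda>n. frob_coeff m \<mu> z n * y ^ n)"
  proof (rule summable_ratio_test[of "1/2" N])
    fix n assume n: "N \<le> n"
    define D where "D = real (Suc n) * m * (real (Suc n) * m + \<mu>)"
    have "real (Suc n) * m + \<mu> \<ge> real n * m" using mu by (simp add: algebra_simps)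
    then have "D \<ge> real (Suc n) * m * (real n * m)"
      unfolding D_def using m by (intro mult_left_mono) auto
    also have "real (Suc n) * m * (real n * m) \<ge> m^2 * real n"
      using m by (simp add: power2_eq_square algebra_simps mult_left_mono)
    also have "m^2 * real n \<ge> m^2 * real N" using n m by (simp add: mult_left_mono)
    also have "m^2 * real N \<ge> 2 * cmod z * cmod y" using N m
      by (simp add: divide_le_eq mult.commute)
    finally have D_ge: "D \<ge> 2 * cmod z * cmod y" .
    have "0 \<le> m * real n" using m by simp
    then have "real (Suc n) * m + \<mu> > 0" using mu by (simp add: algebra_simps)
    then have D_pos: "D > 0" unfolding D_def using m by simp
    have "frob_coeff m \<mu> z (Suc n) * y ^ Suc n = (- z * y / of_real D) * (frob_coeff m \<mu> z n * y ^ n)"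
      by (simp add: D_def algebra_simps)
    then have "cmod (frob_coeff m \<mu> z (Suc n) * y ^ Suc n) = cmod z * cmod y / D * cmod (frob_coeff m \<mu> z n * y ^ n)"
      using D_pos by (simp add: norm_mult norm_divide)
    also have "\<dots> \<le> 1/2 * cmod (frob_coeff m \<mu> z n * y ^ n)"
      using D_ge D_pos by (intro mult_right_mono) (auto simp: divide_le_eq)
    finally show "cmod (frob_coeff m \<mu> z (Suc n) * y ^ Suc n) \<le> 1/2 * cmod (frob_coeff m \<mu> z n * y ^ n)" .
  qed simp
qed

lemma frob_pseries_ode:
  fixes m \<mu> :: real and z y :: complex
  assumes m: "m > 0" and mu: "\<mu> > - m"
  defines "c \<equiv> frob_coeff m \<mu> z"
  shows "of_real (m^2) * y * pseries (diffs (diffs c)) y + of_real (m * (m + \<mu>)) * pseries (diffs c) y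
           + z * pseries c y = 0"
proof -
  have entire: "entire_coeffs c" "entire_coeffs (diffs c)" "entire_coeffs (diffs (diffs c))"
    unfolding c_def using entire_frob_coeff[OF m mu] by (auto intro: entire_coeffs_diffs)
  have termwise: "of_real (m^2) * (of_nat n * diffs c n * y^n) + of_real (m * (m + \<mu>)) * (diffs c n * y^n)
      + z * (c n * y^n) = 0" for n
  proof -
    define D where "D = m * (real (Suc n) * m + \<mu>)"
    have "0 \<le> m * real n" using m by simp
    then have "real (Suc n) * m + \<mu> > 0" using mu by (simp add: algebra_simps)
    then have D_pos: "D > 0" unfolding D_def using m by simp
    have "of_real (real (Suc n) * m * (real (Suc n) * m + \<mu>)) = (of_nat (Suc n) :: complex) * of_real D"
      unfolding D_def by (simp only: of_real_mult mult.assoc of_real_of_nat_eq)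
    then have "diffs c n = - z * c n / of_real D"
      unfolding diffs_def c_def frob_coeff.simps by (simp del: of_nat_Suc)
    have "of_real (m^2) * of_nat n + of_real (m * (m + \<mu>)) = complex_of_real D"
      unfolding D_def by (simp add: algebra_simps power2_eq_square)
    moreover have "of_real (m^2) * (of_nat n * diffs c n * y^n) + of_real (m * (m + \<mu>)) * (diffs c n * y^n)
        = (of_real (m^2) * of_nat n + of_real (m * (m + \<mu>))) * diffs c n * y^n"
      by (simp add: algebra_simps)
    ultimately have "of_real (m^2) * (of_nat n * diffs c n * y^n) + of_real (m * (m + \<mu>)) * (diffs c n * y^n)
        = of_real D * diffs c n * y^n"
      by simp
    also have "\<dots> = - z * (c n * y^n)"
      using \<open>diffs c n = - z * c n / of_real D\<close> D_pos by simp
    finally show ?thesis by simp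
  qed
  have "(\<lambda>n. of_nat n * diffs c n * y^n) sums (y * pseries (diffs (diffs c)) y)"
  proof -
    have "(\<lambda>n. y * (diffs (diffs c) n * y^n)) sums (y * pseries (diffs (diffs c)) y)"
      using entire(3) unfolding pseries_def entire_coeffs_def by (intro sums_mult summable_sums) blast
    then have "(\<lambda>n. of_nat (Suc n) * diffs c (Suc n) * y^(Suc n)) sums (y * pseries (diffs (diffs c)) y)"
      by (simp add: diffs_def algebra_simps)
    then show ?thesis by (subst (asm) sums_Suc_iff) simp
  qed
  moreover have "(\<lambda>n. diffs c n * y^n) sums pseries (diffs c) y" "(\<lambda>n. c n * y^n) sums pseries c y"
    using entire unfolding pseries_def entire_coeffs_def by (blast intro: summable_sums)+
  ultimately have "(\<lambda>n. of_real (m^2) * (of_nat n * diffs c n * y^n) + of_real (m * (m + \<mu>)) * (diffs c n * y^n)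
      + z * (c n * y^n)) sums (of_real (m^2) * (y * pseries (diffs (diffs c)) y)
      + of_real (m * (m + \<mu>)) * pseries (diffs c) y + z * pseries c y)"
    by (intro sums_add sums_mult)
  then show ?thesis
    unfolding termwise using sums_unique2[OF _ sums_zero] by (simp add: mult.assoc)
qed

definition frob_sol :: "real \<Rightarrow> real \<Rightarrow> real \<Rightarrow> complex \<Rightarrow> real \<Rightarrow> complex" where
  "frob_sol m \<mu> s z x = of_real (x powr s) * pseries (frob_coeff m \<mu> z) (of_real (x powr m))"

definition frob_sol' :: "real \<Rightarrow> real \<Rightarrow> real \<Rightarrow> complex \<Rightarrow> real \<Rightarrow> complex" where
  "frob_sol' m \<mu> s z x = of_real (x powr (s - 1)) *
     (of_real s * pseries (frob_coeff m \<mu> z) (of_real (x powr m))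
      + of_real m * of_real (x powr m) * pseries (diffs (frob_coeff m \<mu> z)) (of_real (x powr m)))"

lemma frob_sol_has_vector_derivative:
  "m > 0 \<Longrightarrow> \<mu> > - m \<Longrightarrow> x > 0 \<Longrightarrow>
    (frob_sol m \<mu> s z has_vector_derivative frob_sol' m \<mu> s z x) (at x)"
  unfolding frob_sol_def[abs_def] frob_sol'_def
  by (intro has_vector_derivative_powr_pseries entire_frob_coeff)

lemma powr_mult_frob_sol':
  "of_real (x powr \<beta>) * frob_sol' m \<mu> s z x =
     of_real s * (of_real (x powr (s + \<beta> - 1)) * pseries (frob_coeff m \<mu> z) (of_real (x powr m)))
     + of_real m * (of_real (x powr (s + \<beta> - 1 + m)) * pseries (diffs (frob_coeff m \<mu> z)) (of_real (x powr m)))"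
proof -
  have "x powr \<beta> * x powr (s - 1) = x powr (s + \<beta> - 1)"
    "x powr \<beta> * (x powr (s - 1) * x powr m) = x powr (s + \<beta> - 1 + m)"
    by (simp_all add: powr_add[symmetric] algebra_simps)
  moreover have "of_real (x powr \<beta>) * frob_sol' m \<mu> s z x
    = of_real s * (of_real (x powr \<beta> * x powr (s - 1)) * pseries (frob_coeff m \<mu> z) (of_real (x powr m)))
      + of_real m * (of_real (x powr \<beta> * (x powr (s - 1) * x powr m)) * pseries (diffs (frob_coeff m \<mu> z)) (of_real (x powr m)))"
    unfolding frob_sol'_def by (simp add: algebra_simps)
  ultimately show ?thesis by simp
qed

lemma frob_quasi_derivative_eq:
  fixes m \<mu> s \<alpha> \<beta> x :: real and z :: complex
  assumes m: "m > 0" "\<mu> > - m" and mab: "m = 2 + \<alpha> - \<beta>" and s: "2 * s = 1 - \<beta> + \<mu>"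
  defines "P0 \<equiv> pseries (frob_coeff m \<mu> z) (of_real (x powr m))"
    and "P1 \<equiv> pseries (diffs (frob_coeff m \<mu> z)) (of_real (x powr m))"
    and "P2 \<equiv> pseries (diffs (diffs (frob_coeff m \<mu> z))) (of_real (x powr m))"
  shows "of_real s * (of_real (x powr (s + \<beta> - 1 - 1)) * (of_real (s + \<beta> - 1) * P0 + of_real m * of_real (x powr m) * P1))
      + of_real m * (of_real (x powr (s + \<beta> - 1 + m - 1)) * (of_real (s + \<beta> - 1 + m) * P1 + of_real m * of_real (x powr m) * P2))
    = (of_real ((\<mu>^2 - (1 - \<beta>)^2) / 4 * x powr (\<beta> - 2)) - z * of_real (x powr \<alpha>)) * frob_sol m \<mu> s z x"
    (is "?D = ?T")
proof -
  define X Y where "X = x powr (s + \<beta> - 2)" and "Y = x powr m"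
  have powrs: "x powr (s + \<beta> - 1 - 1) = X" "x powr (s + \<beta> - 1 + m - 1) = X * Y"
    "x powr (\<beta> - 2) * x powr s = X" "x powr \<alpha> * x powr s = X * Y"
    unfolding X_def Y_def mab by (simp_all add: powr_add[symmetric] algebra_simps)
  have mu: "\<mu> = 2 * s + \<beta> - 1" using s by simp
  have q: "(\<mu>^2 - (1 - \<beta>)^2) / 4 = s * (s + \<beta> - 1)"
    unfolding mu by (simp add: power2_eq_square field_simps)
  have "?T = of_real (s * (s + \<beta> - 1)) * of_real (x powr (\<beta> - 2) * x powr s) * P0
      - z * of_real (x powr \<alpha> * x powr s) * P0"
    unfolding frob_sol_def P0_def q by (simp add: algebra_simps)
  then have "?D - ?T = of_real s * (of_real X * (of_real (s + \<beta> - 1) * P0 + of_real m * of_real Y * P1))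
      + of_real m * (of_real (X * Y) * (of_real (s + \<beta> - 1 + m) * P1 + of_real m * of_real Y * P2))
      - (of_real (s * (s + \<beta> - 1)) * of_real X * P0 - z * of_real (X * Y) * P0)"
    unfolding powrs Y_def by simp
  also have "\<dots> = of_real X * of_real Y * (of_real (m^2) * of_real Y * P2 + of_real (m * (m + \<mu>)) * P1 + z * P0)"
    unfolding mu by (simp add: algebra_simps power2_eq_square)
  also have "\<dots> = 0"
    unfolding P0_def P1_def P2_def Y_def frob_pseries_ode[OF m] by simp
  finally show ?thesis by simp
qed

lemma frob_quasi_derivative:
  assumes "m > 0" "\<mu> > - m" "m = 2 + \<alpha> - \<beta>" "2 * s = 1 - \<beta> + \<mu>" and x: "x > 0"
  shows "((\<lambda>x. of_real (x powr \<beta>) * frob_sol' m \<mu> s z x) has_vector_derivative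
     (of_real ((\<mu>^2 - (1 - \<beta>)^2) / 4 * x powr (\<beta> - 2)) - z * of_real (x powr \<alpha>)) * frob_sol m \<mu> s z x) (at x)"
proof -
  have c: "entire_coeffs (frob_coeff m \<mu> z)" "entire_coeffs (diffs (frob_coeff m \<mu> z))"
    using entire_frob_coeff[OF assms(1,2)] by (auto intro: entire_coeffs_diffs)
  show ?thesis
    unfolding powr_mult_frob_sol'
    by (rule has_vector_derivative_eq_rhs[OF has_vector_derivative_add[OF
          has_vector_derivative_mult_right[OF has_vector_derivative_powr_pseries[OF c(1) x]]
          has_vector_derivative_mult_right[OF has_vector_derivative_powr_pseries[OF c(2) x]]]])
       (rule frob_quasi_derivative_eq[OF assms(1-4)])
qed

lemma frob_sol_asymp:
  assumes "m > 0" "\<mu> > - m"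
  shows "((\<lambda>x. frob_sol m \<mu> s z x / of_real (x powr s)) \<longlongrightarrow> 1) (at_right 0)"
proof (rule Lim_transform_eventually)
  show "((\<lambda>x. pseries (frob_coeff m \<mu> z) (of_real (x powr m))) \<longlongrightarrow> 1) (at_right 0)"
    using pseries_tendsto_at_right_0[OF entire_frob_coeff[OF assms] \<open>m > 0\<close>] by simp
  show "\<forall>\<^sub>F x in at_right 0. pseries (frob_coeff m \<mu> z) (of_real (x powr m)) = frob_sol m \<mu> s z x / of_real (x powr s)"
    using eventually_at_right_less[of 0] by eventually_elim (simp add: frob_sol_def)
qed

lemma frob_sol'_asymp:
  assumes "m > 0" "\<mu> > - m"
  shows "((\<lambda>x. frob_sol' m \<mu> s z x / of_real (x powr (s - 1))) \<longlongrightarrow> of_real s) (at_right 0)"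
proof (rule Lim_transform_eventually)
  let ?c = "frob_coeff m \<mu> z"
  have entire: "entire_coeffs ?c" "entire_coeffs (diffs ?c)"
    using entire_frob_coeff[OF assms] by (auto intro: entire_coeffs_diffs)
  from tendsto_add[OF tendsto_mult[OF tendsto_const pseries_tendsto_at_right_0[OF entire(1) assms(1)]]
      tendsto_mult[OF tendsto_mult[OF tendsto_const tendsto_of_real_powr_at_right_0[OF assms(1)]]
        pseries_tendsto_at_right_0[OF entire(2) assms(1)]]]
  show "((\<lambda>x. of_real s * pseries ?c (of_real (x powr m)) + of_real m * of_real (x powr m) * pseries (diffs ?c) (of_real (x powr m)))
      \<longlongrightarrow> of_real s) (at_right 0)" by simp
  show "\<forall>\<^sub>F x in at_right 0. of_real s * pseries ?c (of_real (x powr m)) + of_real m * of_real (x powr m) * pseries (diffs ?c) (of_real (x powr m))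
      = frob_sol' m \<mu> s z x / of_real (x powr (s - 1))"
    using eventually_at_right_less[of 0] by eventually_elim (simp add: frob_sol'_def)
qed

lemma frob_sol_remainder_asymp:
  assumes "m > 0" "\<mu> > - m" "r < m"
  shows "((\<lambda>x. (frob_sol m \<mu> s z x - of_real (x powr s)) / of_real (x powr (s + r))) \<longlongrightarrow> 0) (at_right 0)"
proof (rule Lim_transform_eventually)
  let ?c = "frob_coeff m \<mu> z" and ?Q = "\<lambda>x. pseries (\<lambda>n. frob_coeff m \<mu> z (Suc n)) (of_real (x powr m))"
  have entire: "entire_coeffs ?c" by (rule entire_frob_coeff[OF assms(1,2)])
  have "m - r > 0" using assms(3) by simp
  from tendsto_mult[OF tendsto_of_real_powr_at_right_0[OF this]
      pseries_tendsto_at_right_0[OF entire_coeffs_shift[OF entire] assms(1)]]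
  show "((\<lambda>x. of_real (x powr (m - r)) * ?Q x) \<longlongrightarrow> 0) (at_right 0)" by simp
  show "\<forall>\<^sub>F x in at_right 0. of_real (x powr (m - r)) * ?Q x = (frob_sol m \<mu> s z x - of_real (x powr s)) / of_real (x powr (s + r))"
    using eventually_at_right_less[of 0]
  proof eventually_elim
    case (elim x)
    have "x powr s * x powr m = x powr (s + r) * x powr (m - r)"
      by (simp add: powr_add[symmetric])
    then have "frob_sol m \<mu> s z x - of_real (x powr s) = of_real (x powr (s + r)) * (of_real (x powr (m - r)) * ?Q x)"
      unfolding frob_sol_def pseries_split_head[OF entire] by (simp add: algebra_simps flip: of_real_mult)
    then show ?case using elim by simp
  qed
qed

lemma continuous_on_pseries_powr [continuous_intros]:
  assumes "entire_coeffs c"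
  shows "continuous_on {0<..} (\<lambda>x. pseries c (of_real (x powr m)))"
proof (rule continuous_on_compose2[of UNIV "pseries c"])
  show "continuous_on UNIV (pseries c)"
    using pseries_has_field_derivative[OF assms] by (blast intro: continuous_at_imp_continuous_on DERIV_isCont)
qed (auto intro!: continuous_intros)

lemma continuous_on_frob_sol:
  assumes "m > 0" "\<mu> > - m"
  shows "continuous_on {0<..} (frob_sol m \<mu> s z)" "continuous_on {0<..} (frob_sol' m \<mu> s z)"
  using entire_frob_coeff[OF assms] unfolding frob_sol_def[abs_def] frob_sol'_def[abs_def]
  by (auto intro!: continuous_intros entire_coeffs_diffs)

section \<open>A smooth cutoff\<close>

lemma has_vector_derivative_glue:
  fixes f g f' g' :: "real \<Rightarrow> 'a::real_normed_vector"
  assumes "\<And>x. (f has_vector_derivative f' x) (at x)" and "\<And>x. (g has_vector_derivative g' x) (at x)"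
    and "f c = g c" and "f' c = g' c"
  shows "((\<lambda>x. if x \<le> c then f x else g x) has_vector_derivative (if x \<le> c then f' x else g' x)) (at x)"
proof -
  have "((\<lambda>x. if x \<in> {..c} then f x else g x) has_vector_derivative (if x \<in> {..c} then f' x else g' x))
      (at x within UNIV)"
    by (rule has_vector_derivative_If_within_closures[where T="{c<..}"])
       (use assms in \<open>auto intro: has_vector_derivative_at_within dest: sym\<close>)
  then show ?thesis by simp
qed

(* step_poly - 1 vanishes to fourth order at 0 and step_poly at 1, so cutoff is C^3. *)
definition step_poly :: "real \<Rightarrow> real" where
  "step_poly t = 1 - 35*t^4 + 84*t^5 - 70*t^6 + 20*t^7"
definition step_poly' :: "real \<Rightarrow> real" where
  "step_poly' t = -140*t^3 + 420*t^4 - 420*t^5 + 140*t^6"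
definition step_poly'' :: "real \<Rightarrow> real" where
  "step_poly'' t = -420*t^2 + 1680*t^3 - 2100*t^4 + 840*t^5"
definition step_poly''' :: "real \<Rightarrow> real" where
  "step_poly''' t = -840*t + 5040*t^2 - 8400*t^3 + 4200*t^4"

definition cutoff :: "real \<Rightarrow> real" where
  "cutoff x = (if x \<le> 1 then 1 else if x \<le> 2 then step_poly (x - 1) else 0)"
definition cutoff' :: "real \<Rightarrow> real" where
  "cutoff' x = (if x \<le> 1 then 0 else if x \<le> 2 then step_poly' (x - 1) else 0)"
definition cutoff'' :: "real \<Rightarrow> real" where
  "cutoff'' x = (if x \<le> 1 then 0 else if x \<le> 2 then step_poly'' (x - 1) else 0)"
definition cutoff''' :: "real \<Rightarrow> real" where
  "cutoff''' x = (if x \<le> 1 then 0 else if x \<le> 2 then step_poly''' (x - 1) else 0)"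

lemma step_poly_derivatives:
  "((\<lambda>x. step_poly (x - 1)) has_vector_derivative step_poly' (x - 1)) (at x)"
  "((\<lambda>x. step_poly' (x - 1)) has_vector_derivative step_poly'' (x - 1)) (at x)"
  "((\<lambda>x. step_poly'' (x - 1)) has_vector_derivative step_poly''' (x - 1)) (at x)"
  unfolding step_poly_def step_poly'_def step_poly''_def step_poly'''_def
    has_real_derivative_iff_has_vector_derivative[symmetric]
  by (auto intro!: derivative_eq_intros simp: algebra_simps eval_nat_numeral)

lemma cutoff_derivatives:
  "(cutoff has_real_derivative cutoff' x) (at x)"
  "(cutoff' has_real_derivative cutoff'' x) (at x)"
  "(cutoff'' has_real_derivative cutoff''' x) (at x)"
  unfolding has_real_derivative_iff_has_vector_derivative
    cutoff_def[abs_def] cutoff'_def cutoff''_def[abs_def] cutoff'''_def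
  by (rule has_vector_derivative_glue has_vector_derivative_const step_poly_derivatives
      | simp add: step_poly_def step_poly'_def step_poly''_def step_poly'''_def)+

lemma continuous_on_cutoff [continuous_intros]:
  "continuous_on S cutoff" "continuous_on S cutoff'" "continuous_on S cutoff''"
  using cutoff_derivatives
  by (auto intro!: continuous_at_imp_continuous_on DERIV_isCont)

lemma cutoff_left: "x \<le> 1 \<Longrightarrow> cutoff x = 1 \<and> cutoff' x = 0 \<and> cutoff'' x = 0"
  by (simp add: cutoff_def cutoff'_def cutoff''_def)

lemma cutoff_right: "x \<ge> 2 \<Longrightarrow> cutoff x = 0 \<and> cutoff' x = 0 \<and> cutoff'' x = 0"
  by (cases "x = 2") (simp_all add: cutoff_def cutoff'_def cutoff''_def step_poly_def step_poly'_def step_poly''_def)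

section \<open>Integrability and divergence near 0\<close>

lemma ACloc_if_has_vector_derivative:
  assumes "\<And>x. x > 0 \<Longrightarrow> (G has_vector_derivative H x) (at x)"
    and "continuous_on {0<..} H"
  shows "ACloc G H"
  unfolding ACloc_def
proof (intro allI impI conjI)
  fix a b :: real assume a: "0 < a" and ab: "a \<le> b"
  have "continuous_on {a..b} H" using assms(2) by (rule continuous_on_subset) (use a in auto)
  then show integrable: "set_integrable lborel {a..b} H"
    unfolding set_integrable_def by (rule borel_integrable_compact[OF compact_Icc])
  have "(H has_integral (G b - G a)) {a..b}"
  proof (rule fundamental_theorem_of_calculus[OF ab])
    fix x assume "x \<in> {a..b}"
    then show "(G has_vector_derivative H x) (at x within {a..b})"
      using a by (auto intro: has_vector_derivative_at_within[OF assms(1)])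
  qed
  then show "G b - G a = (LINT x:{a..b}|lborel. H x)"
    using set_borel_integral_eq_integral(2)[OF integrable] by (simp add: integral_unique)
qed

lemma set_borel_measurable_continuous_on:
  fixes F :: "real \<Rightarrow> 'a::real_normed_vector"
  assumes "continuous_on S F" "S \<in> sets borel"
  shows "set_borel_measurable lborel S F"
  unfolding set_borel_measurable_def measurable_lborel2
  by (rule borel_measurable_continuous_on_indicator[OF assms(2,1)])

lemma set_integrable_powr_at_0:
  fixes a e :: real
  assumes "a > -1" and "e \<ge> 0"
  shows "set_integrable lborel {0<..e} (\<lambda>x. x powr a)"
proof -
  have "(\<lambda>x. x powr a) absolutely_integrable_on {0<..e}"
    using integrable_on_powr_from_0'[OF assms] by (subst absolutely_integrable_on_iff_nonneg) auto
  moreover have "set_borel_measurable lborel {0<..e} (\<lambda>x. x powr a)"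
    by (rule set_borel_measurable_continuous_on) (auto intro!: continuous_intros)
  ultimately show ?thesis
    unfolding set_integrable_def set_borel_measurable_def using integrable_completion by blast
qed

lemma norm_powr_bounds_at_right_0:
  fixes h :: "real \<Rightarrow> complex"
  assumes "((\<lambda>x. h x / of_real (x powr p)) \<longlongrightarrow> L) (at_right 0)"
  obtains e where "e > 0"
    and "\<And>x. 0 < x \<Longrightarrow> x \<le> e \<Longrightarrow> cmod L / 2 * x powr p \<le> cmod (h x)"
    and "\<And>x. 0 < x \<Longrightarrow> x \<le> e \<Longrightarrow> cmod (h x) \<le> (cmod L + 1) * x powr p"
proof -
  have lim: "((\<lambda>x. cmod (h x) / x powr p) \<longlongrightarrow> cmod L) (at_right 0)"
    using tendsto_norm[OF assms] by (simp add: norm_divide)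
  have "\<forall>\<^sub>F x in at_right 0. cmod L / 2 \<le> cmod (h x) / x powr p"
  proof (cases "L = 0")
    case False
    then show ?thesis
      using order_tendstoD(1)[OF lim, of "cmod L / 2"] by (auto elim: eventually_mono)
  qed simp
  moreover have "\<forall>\<^sub>F x in at_right 0. cmod (h x) / x powr p < cmod L + 1"
    by (rule order_tendstoD(2)[OF lim]) simp
  ultimately have "\<forall>\<^sub>F x in at_right 0. cmod L / 2 \<le> cmod (h x) / x powr p \<and> cmod (h x) / x powr p < cmod L + 1"
    by (rule eventually_conj)
  then obtain b where "b > 0"
    and b: "\<And>x. 0 < x \<Longrightarrow> x < b \<Longrightarrow> cmod L / 2 \<le> cmod (h x) / x powr p \<and> cmod (h x) / x powr p < cmod L + 1"
    unfolding eventually_at_right_field by blast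
  show thesis
  proof (rule that[of "b / 2"])
    show "b / 2 > 0" using \<open>b > 0\<close> by simp
    fix x assume "0 < x" "x \<le> b / 2"
    then have "cmod L / 2 \<le> cmod (h x) / x powr p" "cmod (h x) / x powr p < cmod L + 1"
      using b[of x] \<open>b > 0\<close> by auto
    with \<open>0 < x\<close> show "cmod L / 2 * x powr p \<le> cmod (h x)" "cmod (h x) \<le> (cmod L + 1) * x powr p"
      by (simp_all add: pos_le_divide_eq divide_less_eq)
  qed
qed

lemma set_integrable_weighted_square_at_0:
  fixes h :: "real \<Rightarrow> complex"
  assumes cont: "continuous_on {0<..} h" and "e \<ge> 0"
    and bound: "\<And>x. 0 < x \<Longrightarrow> x \<le> e \<Longrightarrow> cmod (h x) \<le> C * x powr p"
    and exponent: "\<alpha> + 2 * p > -1"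
  shows "set_integrable lborel {0<..e} (\<lambda>x. x powr \<alpha> * (cmod (h x))\<^sup>2)"
proof (rule set_integrable_bound[OF set_integrable_mult_right[OF set_integrable_powr_at_0[OF exponent \<open>e \<ge> 0\<close>]]])
  show "set_borel_measurable lborel {0<..e} (\<lambda>x. x powr \<alpha> * (cmod (h x))\<^sup>2)"
    by (rule set_borel_measurable_continuous_on) (auto intro!: continuous_intros continuous_on_subset[OF cont])
  show "AE x in lborel. x \<in> {0<..e} \<longrightarrow> norm (x powr \<alpha> * (cmod (h x))\<^sup>2) \<le> norm (C\<^sup>2 * x powr (\<alpha> + 2 * p))"
  proof (rule AE_I2, intro impI)
    fix x assume "x \<in> {0<..e}"
    then have x: "0 < x" "x \<le> e" by auto
    have "(cmod (h x))\<^sup>2 \<le> (C * x powr p)\<^sup>2"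
      using bound[OF x] by (intro power_mono) auto
    then have "x powr \<alpha> * (cmod (h x))\<^sup>2 \<le> x powr \<alpha> * (C * x powr p)\<^sup>2"
      by (intro mult_left_mono) auto
    also have "\<dots> = x powr \<alpha> * (C\<^sup>2 * x powr (2 * p))"
      by (simp add: power_mult_distrib power2_eq_square powr_add[symmetric])
    also have "\<dots> = C\<^sup>2 * x powr (\<alpha> + 2 * p)"
      by (simp add: powr_add)
    finally show "norm (x powr \<alpha> * (cmod (h x))\<^sup>2) \<le> norm (C\<^sup>2 * x powr (\<alpha> + 2 * p))" by simp
  qed
qed

lemma L2w_if_asymp_at_0:
  fixes h :: "real \<Rightarrow> complex"
  assumes cont: "continuous_on {0<..} h" and vanish: "\<And>x. x \<ge> b \<Longrightarrow> h x = 0"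
    and lim: "((\<lambda>x. h x / of_real (x powr p)) \<longlongrightarrow> L) (at_right 0)"
    and exponent: "\<alpha> + 2 * p > -1"
  shows "L2w \<alpha> h"
proof -
  define F where "F = (\<lambda>x. x powr \<alpha> * (cmod (h x))\<^sup>2)"
  obtain e where e: "e > 0" and "\<And>x. 0 < x \<Longrightarrow> x \<le> e \<Longrightarrow> cmod L / 2 * x powr p \<le> cmod (h x)"
    and bound: "\<And>x. 0 < x \<Longrightarrow> x \<le> e \<Longrightarrow> cmod (h x) \<le> (cmod L + 1) * x powr p"
    using norm_powr_bounds_at_right_0[OF lim] by metis
  have near_0: "set_integrable lborel {0<..e} F"
    unfolding F_def by (rule set_integrable_weighted_square_at_0[OF cont _ bound exponent]) (use e in simp)
  have "continuous_on {0<..} F"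
    unfolding F_def by (intro continuous_intros cont) auto
  then have middle: "set_integrable lborel {e..max e b} F"
    unfolding set_integrable_def
    by (rule borel_integrable_compact[OF compact_Icc continuous_on_subset]) (use e in auto)
  have "set_integrable lborel ({0<..e} \<union> {e..max e b}) F"
    by (rule set_integrable_Un[OF near_0 middle]) auto
  moreover have "(\<lambda>x. indicator ({0<..e} \<union> {e..max e b}) x *\<^sub>R F x) = (\<lambda>x. indicator {0<..} x *\<^sub>R F x)"
  proof
    fix x :: real
    show "indicator ({0<..e} \<union> {e..max e b}) x *\<^sub>R F x = indicator {0<..} x *\<^sub>R F x"
      using e vanish[of x] by (cases "x \<le> max e b") (auto simp: indicator_def F_def)
  qed
  ultimately have "set_integrable lborel {0<..} F"
    unfolding set_integrable_def by (simp only:)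
  moreover have "set_borel_measurable lborel {0<..} h"
    by (rule set_borel_measurable_continuous_on[OF cont]) simp
  ultimately show ?thesis unfolding L2w_def F_def by (intro conjI)
qed

lemma nn_integral_powr_Icc:
  assumes "0 < a" "a \<le> b" "e > 0" "c \<ge> 0"
  shows "(\<integral>\<^sup>+x. ennreal (c * x powr (- e - 1)) * indicator {a..b} x \<partial>lborel)
    = ennreal (c * (a powr - e - b powr - e) / e)"
proof -
  define F where "F = (\<lambda>x::real. - (c / e) * x powr (- e))"
  have "(\<integral>\<^sup>+x. ennreal (c * x powr (- e - 1)) * indicator {a..b} x \<partial>lborel) = ennreal (F b - F a)"
  proof (rule nn_integral_FTC_Icc)
    fix x assume "x \<in> {a..b}"
    then have "x > 0" using assms(1) by simp
    have "(F has_real_derivative - (c / e) * (- e * x powr (- e - 1))) (at x)"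
      unfolding F_def by (intro DERIV_cmult has_real_derivative_powr \<open>x > 0\<close>)
    then show "(F has_real_derivative c * x powr (- e - 1)) (at x)"
      using assms(3) by simp
    show "0 \<le> c * x powr (- e - 1)" using assms(4) by simp
  qed (use assms in auto)
  also have "F b - F a = c * (a powr - e - b powr - e) / e"
    unfolding F_def by (simp add: algebra_simps diff_divide_distrib)
  finally show ?thesis .
qed

lemma nn_integral_tail_tendsto_infinity:
  fixes h :: "real \<Rightarrow> complex"
  assumes lim: "((\<lambda>x. h x / of_real (x powr p)) \<longlongrightarrow> L) (at_right 0)" and "L \<noteq> 0"
    and exponent: "q + 2 * p < -1"
  shows "((\<lambda>\<epsilon>. \<integral>\<^sup>+ x\<in>{\<epsilon><..}. ennreal (x powr q * (cmod (h x))\<^sup>2) \<partial>lborel) \<longlongrightarrow> \<infinity>) (at_right 0)"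
proof -
  define e where "e = - 1 - q - 2 * p"
  define c where "c = (cmod L)^2 / 4"
  have e: "e > 0" and c: "c > 0" using exponent \<open>L \<noteq> 0\<close> by (simp_all add: e_def c_def)
  obtain \<eta> where \<eta>: "\<eta> > 0" and near_0: "\<And>x. 0 < x \<Longrightarrow> x \<le> \<eta> \<Longrightarrow> cmod L / 2 * x powr p \<le> cmod (h x)"
    and "\<And>x. 0 < x \<Longrightarrow> x \<le> \<eta> \<Longrightarrow> cmod (h x) \<le> (cmod L + 1) * x powr p"
    using norm_powr_bounds_at_right_0[OF lim] by metis
  have lower: "c * x powr (- e - 1) \<le> x powr q * (cmod (h x))\<^sup>2" if x: "0 < x" "x \<le> \<eta>" for x
  proof -
    have "x powr q * (cmod L / 2 * x powr p)\<^sup>2 \<le> x powr q * (cmod (h x))\<^sup>2"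
      using near_0[OF x] by (intro mult_left_mono power_mono) auto
    moreover have "x powr q * (cmod L / 2 * x powr p)\<^sup>2 = c * x powr (- e - 1)"
      unfolding c_def e_def by (simp add: power2_eq_square power_divide powr_add[symmetric] algebra_simps)
    ultimately show ?thesis by simp
  qed
  have "ennreal (c * ((2 * \<epsilon>) powr - e - \<eta> powr - e) / e)
      \<le> (\<integral>\<^sup>+ x\<in>{\<epsilon><..}. ennreal (x powr q * (cmod (h x))\<^sup>2) \<partial>lborel)"
    if \<epsilon>: "0 < \<epsilon>" "2 * \<epsilon> \<le> \<eta>" for \<epsilon>
  proof -
    have "ennreal (c * ((2 * \<epsilon>) powr - e - \<eta> powr - e) / e)
        = (\<integral>\<^sup>+x. ennreal (c * x powr (- e - 1)) * indicator {2 * \<epsilon>..\<eta>} x \<partial>lborel)"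
      using \<epsilon> c e by (simp add: nn_integral_powr_Icc)
    also have "\<dots> \<le> (\<integral>\<^sup>+ x. ennreal (x powr q * (cmod (h x))\<^sup>2) * indicator {\<epsilon><..} x \<partial>lborel)"
      using \<epsilon> lower by (intro nn_integral_mono) (auto simp: indicator_def intro: ennreal_leI)
    finally show ?thesis .
  qed
  then have below: "\<forall>\<^sub>F \<epsilon> in at_right 0. ennreal (c * ((2 * \<epsilon>) powr - e - \<eta> powr - e) / e)
      \<le> (\<integral>\<^sup>+ x\<in>{\<epsilon><..}. ennreal (x powr q * (cmod (h x))\<^sup>2) \<partial>lborel)"
    unfolding eventually_at_right_field using \<eta> by (intro exI[of _ "\<eta> / 2"]) auto
  have "filterlim (\<lambda>\<epsilon>. c * ((2 * \<epsilon>) powr - e - \<eta> powr - e) / e) at_top (at_right 0)"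
    using c e by real_asymp
  then have "((\<lambda>\<epsilon>. ennreal (c * ((2 * \<epsilon>) powr - e - \<eta> powr - e) / e)) \<longlongrightarrow> top) (at_right 0)"
    by (simp add: ennreal_tendsto_top_eq_at_top)
  then show ?thesis unfolding infinity_ennreal_def
    by (rule tendsto_sandwich[OF below always_eventually[OF allI[OF top_greatest]] _ tendsto_const])
qed

section \<open>The example\<close>

locale divergent_energy_example =
  fixes \<alpha> \<beta> \<gamma> \<delta> :: real
  assumes alpha: "\<alpha> > -1" and beta: "\<beta> < 1" and gamma: "0 < \<gamma>" "\<gamma> < 1"
    and not_friedrichs_exponent: "(2 + \<alpha> - \<beta>) * \<gamma> \<noteq> 1 - \<beta>" and delta: "0 < \<delta>" "\<delta> < pi"
begin

definition "m = 2 + \<alpha> - \<beta>"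
definition "\<nu> = m * \<gamma>"
definition "s\<^sub>0 = (1 - \<beta> - \<nu>) / 2"
definition "s\<^sub>1 = (1 - \<beta> + \<nu>) / 2"
(* chosen so that the generalized boundary values of f are sin delta and - cos delta *)
definition "A = (1 - \<beta>) * sin \<delta> / \<nu>"
definition "B = - cos \<delta> / (1 - \<beta>)"

definition "w x = of_real A * frob_sol m (- \<nu>) s\<^sub>0 \<i> x + of_real B * frob_sol m \<nu> s\<^sub>1 \<i> x"
definition "w' x = of_real A * frob_sol' m (- \<nu>) s\<^sub>0 \<i> x + of_real B * frob_sol' m \<nu> s\<^sub>1 \<i> x"

definition "f x = of_real (cutoff x) * w x"
definition "f' x = of_real (cutoff x) * w' x + of_real (cutoff' x) * w x"
(* the derivative of x^beta f' = cutoff (x^beta w') + cutoff' (x^beta w) *)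
definition "k x = of_real (cutoff x) * (of_real (qcoef \<alpha> \<beta> \<gamma> * x powr (\<beta> - 2)) - \<i> * of_real (x powr \<alpha>)) * w x
   + of_real (2 * cutoff' x * x powr \<beta>) * w' x
   + of_real (cutoff'' x * x powr \<beta> + \<beta> * cutoff' x * x powr (\<beta> - 1)) * w x"
definition "g x = (if x > 0 then tau \<alpha> \<beta> \<gamma> f k x - \<i> * f x else 0)"

lemma m_pos: "m > 0" and \<nu>_pos: "\<nu> > 0" and \<nu>_less_m: "\<nu> < m"
  using alpha beta gamma unfolding m_def \<nu>_def by auto

lemma frob_params: "- \<nu> > - m" "\<nu> > - m" "2 * s\<^sub>0 = 1 - \<beta> + - \<nu>" "2 * s\<^sub>1 = 1 - \<beta> + \<nu>"
  using \<nu>_pos \<nu>_less_m unfolding s\<^sub>0_def s\<^sub>1_def by auto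

lemma s\<^sub>1_eq: "s\<^sub>1 = s\<^sub>0 + \<nu>"
  unfolding s\<^sub>0_def s\<^sub>1_def by (simp add: field_simps)

lemma qcoef_eq: "qcoef \<alpha> \<beta> \<gamma> = ((- \<nu>)^2 - (1 - \<beta>)^2) / 4" "qcoef \<alpha> \<beta> \<gamma> = (\<nu>^2 - (1 - \<beta>)^2) / 4"
  unfolding qcoef_def \<nu>_def m_def by (simp_all add: power_mult_distrib)

lemma w_has_vector_derivative: "x > 0 \<Longrightarrow> (w has_vector_derivative w' x) (at x)"
  unfolding w_def[abs_def] w'_def
  by (intro has_vector_derivative_add has_vector_derivative_mult_right frob_sol_has_vector_derivative
      m_pos frob_params)

lemma w_quasi_derivative:
  assumes "x > 0"
  shows "((\<lambda>x. of_real (x powr \<beta>) * w' x) has_vector_derivative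
    (of_real (qcoef \<alpha> \<beta> \<gamma> * x powr (\<beta> - 2)) - \<i> * of_real (x powr \<alpha>)) * w x) (at x)"
proof -
  let ?q = "\<lambda>x. of_real (qcoef \<alpha> \<beta> \<gamma> * x powr (\<beta> - 2)) - \<i> * of_real (x powr \<alpha>)"
  have "((\<lambda>x. of_real (x powr \<beta>) * frob_sol' m (- \<nu>) s\<^sub>0 \<i> x) has_vector_derivative ?q x * frob_sol m (- \<nu>) s\<^sub>0 \<i> x) (at x)"
    unfolding qcoef_eq(1) by (rule frob_quasi_derivative[OF m_pos frob_params(1) m_def frob_params(3) assms])
  moreover have "((\<lambda>x. of_real (x powr \<beta>) * frob_sol' m \<nu> s\<^sub>1 \<i> x) has_vector_derivative ?q x * frob_sol m \<nu> s\<^sub>1 \<i> x) (at x)"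
    unfolding qcoef_eq(2) by (rule frob_quasi_derivative[OF m_pos frob_params(2) m_def frob_params(4) assms])
  ultimately have "((\<lambda>x. of_real A * (of_real (x powr \<beta>) * frob_sol' m (- \<nu>) s\<^sub>0 \<i> x)
      + of_real B * (of_real (x powr \<beta>) * frob_sol' m \<nu> s\<^sub>1 \<i> x)) has_vector_derivative
      of_real A * (?q x * frob_sol m (- \<nu>) s\<^sub>0 \<i> x) + of_real B * (?q x * frob_sol m \<nu> s\<^sub>1 \<i> x)) (at x)"
    by (intro has_vector_derivative_add has_vector_derivative_mult_right)
  moreover have "(\<lambda>x. of_real A * (of_real (x powr \<beta>) * frob_sol' m (- \<nu>) s\<^sub>0 \<i> x)
      + of_real B * (of_real (x powr \<beta>) * frob_sol' m \<nu> s\<^sub>1 \<i> x)) = (\<lambda>x. of_real (x powr \<beta>) * w' x)"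
    by (simp add: w'_def fun_eq_iff algebra_simps)
  ultimately show ?thesis
    by (auto elim: has_vector_derivative_eq_rhs simp: w_def algebra_simps)
qed


lemma continuous_on_w: "continuous_on {0<..} w" "continuous_on {0<..} w'"
  unfolding w_def[abs_def] w'_def[abs_def]
  by (intro continuous_intros continuous_on_frob_sol m_pos frob_params)+

lemma f_has_vector_derivative: "x > 0 \<Longrightarrow> (f has_vector_derivative f' x) (at x)"
  unfolding f_def[abs_def] f'_def
  by (rule has_vector_derivative_eq_rhs[OF has_vector_derivative_mult[OF
        has_vector_derivative_of_real[OF cutoff_derivatives(1)] w_has_vector_derivative]]) auto

lemma quasi_derivative_f:
  assumes "x > 0"
  shows "((\<lambda>x. of_real (x powr \<beta>) * f' x) has_vector_derivative k x) (at x)"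
proof -
  have "((\<lambda>x. of_real (cutoff x) * (of_real (x powr \<beta>) * w' x) + of_real (cutoff' x) * (of_real (x powr \<beta>) * w x))
      has_vector_derivative k x) (at x)"
    by (rule has_vector_derivative_eq_rhs[OF has_vector_derivative_add[OF
          has_vector_derivative_mult[OF has_vector_derivative_of_real[OF cutoff_derivatives(1)] w_quasi_derivative[OF assms]]
          has_vector_derivative_mult[OF has_vector_derivative_of_real[OF cutoff_derivatives(2)]
            has_vector_derivative_mult[OF has_vector_derivative_of_real[OF has_real_derivative_powr[OF assms]]
              w_has_vector_derivative[OF assms]]]]])
       (simp add: k_def algebra_simps)
  moreover have "(\<lambda>x. of_real (cutoff x) * (of_real (x powr \<beta>) * w' x) + of_real (cutoff' x) * (of_real (x powr \<beta>) * w x))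
      = (\<lambda>x. of_real (x powr \<beta>) * f' x)"
    by (simp add: f'_def fun_eq_iff algebra_simps)
  ultimately show ?thesis by simp
qed

lemma continuous_on_f: "continuous_on {0<..} f" "continuous_on {0<..} f'" "continuous_on {0<..} k"
  unfolding f_def[abs_def] f'_def[abs_def] k_def[abs_def]
  by (intro continuous_intros continuous_on_w; simp)+

lemma tau_f_near_0: "0 < x \<Longrightarrow> x \<le> 1 \<Longrightarrow> tau \<alpha> \<beta> \<gamma> f k x = \<i> * f x"
  unfolding tau_def f_def k_def using cutoff_left[of x]
  by (simp add: algebra_simps powr_minus field_simps)

lemma f_vanishes: "x \<ge> 2 \<Longrightarrow> f x = 0 \<and> k x = 0"
  unfolding f_def k_def using cutoff_right[of x] by simp

lemma eventually_f_eq_w: "\<forall>\<^sub>F x in at_right 0. 0 < x \<and> f x = w x \<and> f' x = w' x"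
  unfolding eventually_at_right_field f_def f'_def
  by (intro exI[of _ 1]) (simp add: cutoff_left)

lemma f_asymp: "((\<lambda>x. f x / of_real (x powr s\<^sub>0)) \<longlongrightarrow> of_real A) (at_right 0)"
proof (rule Lim_transform_eventually)
  have "((\<lambda>x. of_real A * (frob_sol m (- \<nu>) s\<^sub>0 \<i> x / of_real (x powr s\<^sub>0))
      + of_real B * (of_real (x powr \<nu>) * (frob_sol m \<nu> s\<^sub>1 \<i> x / of_real (x powr s\<^sub>1))))
      \<longlongrightarrow> of_real A * 1 + of_real B * (0 * 1)) (at_right 0)"
    by (intro tendsto_intros frob_sol_asymp tendsto_of_real_powr_at_right_0 m_pos frob_params \<nu>_pos)
  then show "((\<lambda>x. of_real A * (frob_sol m (- \<nu>) s\<^sub>0 \<i> x / of_real (x powr s\<^sub>0))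
      + of_real B * (of_real (x powr \<nu>) * (frob_sol m \<nu> s\<^sub>1 \<i> x / of_real (x powr s\<^sub>1))))
      \<longlongrightarrow> of_real A) (at_right 0)" by simp
  show "\<forall>\<^sub>F x in at_right 0. of_real A * (frob_sol m (- \<nu>) s\<^sub>0 \<i> x / of_real (x powr s\<^sub>0))
      + of_real B * (of_real (x powr \<nu>) * (frob_sol m \<nu> s\<^sub>1 \<i> x / of_real (x powr s\<^sub>1)))
      = f x / of_real (x powr s\<^sub>0)"
    using eventually_f_eq_w by eventually_elim (simp add: w_def s\<^sub>1_eq powr_add field_simps)
qed

lemma f_remainder_asymp:
  "((\<lambda>x. (f x - of_real A * of_real (x powr s\<^sub>0)) / of_real (x powr s\<^sub>1)) \<longlongrightarrow> of_real B) (at_right 0)"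
proof (rule Lim_transform_eventually)
  have "((\<lambda>x. of_real A * ((frob_sol m (- \<nu>) s\<^sub>0 \<i> x - of_real (x powr s\<^sub>0)) / of_real (x powr (s\<^sub>0 + \<nu>)))
      + of_real B * (frob_sol m \<nu> s\<^sub>1 \<i> x / of_real (x powr s\<^sub>1)))
      \<longlongrightarrow> of_real A * 0 + of_real B * 1) (at_right 0)"
    by (intro tendsto_intros frob_sol_asymp frob_sol_remainder_asymp m_pos frob_params \<nu>_less_m)
  then show "((\<lambda>x. of_real A * ((frob_sol m (- \<nu>) s\<^sub>0 \<i> x - of_real (x powr s\<^sub>0)) / of_real (x powr (s\<^sub>0 + \<nu>)))
      + of_real B * (frob_sol m \<nu> s\<^sub>1 \<i> x / of_real (x powr s\<^sub>1))) \<longlongrightarrow> of_real B) (at_right 0)" by simp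
  show "\<forall>\<^sub>F x in at_right 0. of_real A * ((frob_sol m (- \<nu>) s\<^sub>0 \<i> x - of_real (x powr s\<^sub>0)) / of_real (x powr (s\<^sub>0 + \<nu>)))
      + of_real B * (frob_sol m \<nu> s\<^sub>1 \<i> x / of_real (x powr s\<^sub>1))
      = (f x - of_real A * of_real (x powr s\<^sub>0)) / of_real (x powr s\<^sub>1)"
    using eventually_f_eq_w by eventually_elim (simp add: w_def s\<^sub>1_eq add_divide_distrib diff_divide_distrib algebra_simps)
qed

lemma f'_asymp: "((\<lambda>x. f' x / of_real (x powr (s\<^sub>0 - 1))) \<longlongrightarrow> of_real (A * s\<^sub>0)) (at_right 0)"
proof (rule Lim_transform_eventually)
  have "((\<lambda>x. of_real A * (frob_sol' m (- \<nu>) s\<^sub>0 \<i> x / of_real (x powr (s\<^sub>0 - 1)))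
      + of_real B * (of_real (x powr \<nu>) * (frob_sol' m \<nu> s\<^sub>1 \<i> x / of_real (x powr (s\<^sub>1 - 1)))))
      \<longlongrightarrow> of_real A * of_real s\<^sub>0 + of_real B * (0 * of_real s\<^sub>1)) (at_right 0)"
    by (intro tendsto_intros frob_sol'_asymp tendsto_of_real_powr_at_right_0 m_pos frob_params \<nu>_pos)
  then show "((\<lambda>x. of_real A * (frob_sol' m (- \<nu>) s\<^sub>0 \<i> x / of_real (x powr (s\<^sub>0 - 1)))
      + of_real B * (of_real (x powr \<nu>) * (frob_sol' m \<nu> s\<^sub>1 \<i> x / of_real (x powr (s\<^sub>1 - 1)))))
      \<longlongrightarrow> of_real (A * s\<^sub>0)) (at_right 0)" by simp
  have powr_s\<^sub>1: "x powr (s\<^sub>1 - 1) = x powr \<nu> * x powr (s\<^sub>0 - 1)" for x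
    unfolding s\<^sub>1_eq by (simp add: powr_add[symmetric] algebra_simps)
  show "\<forall>\<^sub>F x in at_right 0. of_real A * (frob_sol' m (- \<nu>) s\<^sub>0 \<i> x / of_real (x powr (s\<^sub>0 - 1)))
      + of_real B * (of_real (x powr \<nu>) * (frob_sol' m \<nu> s\<^sub>1 \<i> x / of_real (x powr (s\<^sub>1 - 1))))
      = f' x / of_real (x powr (s\<^sub>0 - 1))"
    using eventually_f_eq_w by eventually_elim (simp add: w'_def powr_s\<^sub>1 field_simps)
qed

(* the only use of the hypothesis (2 + alpha - beta) gamma ~= 1 - beta: f' ~ A s0 x^(s0 - 1) *)
lemma s\<^sub>0_nonzero: "s\<^sub>0 \<noteq> 0"
  using not_friedrichs_exponent unfolding s\<^sub>0_def \<nu>_def m_def by simp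

lemma A_nonzero: "A \<noteq> 0"
  unfolding A_def using beta delta \<nu>_pos sin_gt_zero[of \<delta>] by simp

lemma phi_eq: "phi0 \<alpha> \<beta> \<gamma> x = (1 - \<beta>) / \<nu> * x powr s\<^sub>0" "phi1 \<alpha> \<beta> \<gamma> x = x powr s\<^sub>1 / (1 - \<beta>)"
  unfolding phi0_def phi1_def s\<^sub>0_def s\<^sub>1_def \<nu>_def m_def by (simp_all add: field_simps)

lemma boundary_condition:
  "((\<lambda>x. f x / of_real (phi0 \<alpha> \<beta> \<gamma> x)) \<longlongrightarrow> of_real (sin \<delta>)) (at_right 0)"
  "((\<lambda>x. (f x - of_real (sin \<delta>) * of_real (phi0 \<alpha> \<beta> \<gamma> x)) / of_real (phi1 \<alpha> \<beta> \<gamma> x)) \<longlongrightarrow> - of_real (cos \<delta>))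
     (at_right 0)"
proof -
  have "1 - \<beta> \<noteq> 0" "\<nu> \<noteq> 0" using beta \<nu>_pos by auto
  have "(\<lambda>x. f x / of_real (phi0 \<alpha> \<beta> \<gamma> x)) = (\<lambda>x. f x / of_real (x powr s\<^sub>0) / of_real ((1 - \<beta>) / \<nu>))"
    by (simp add: phi_eq fun_eq_iff mult.commute divide_divide_eq_left)
  moreover have "A / ((1 - \<beta>) / \<nu>) = sin \<delta>"
    using \<open>1 - \<beta> \<noteq> 0\<close> \<open>\<nu> \<noteq> 0\<close> by (simp add: A_def)
  ultimately show "((\<lambda>x. f x / of_real (phi0 \<alpha> \<beta> \<gamma> x)) \<longlongrightarrow> of_real (sin \<delta>)) (at_right 0)"
    using tendsto_divide[OF f_asymp tendsto_const, of "of_real ((1 - \<beta>) / \<nu>)"] \<open>1 - \<beta> \<noteq> 0\<close> \<open>\<nu> \<noteq> 0\<close>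
    by (simp flip: of_real_divide)
  have "sin \<delta> * phi0 \<alpha> \<beta> \<gamma> x = A * x powr s\<^sub>0" for x
    using \<open>1 - \<beta> \<noteq> 0\<close> \<open>\<nu> \<noteq> 0\<close> by (simp add: A_def phi_eq)
  then have "of_real (sin \<delta>) * of_real (phi0 \<alpha> \<beta> \<gamma> x) = of_real A * complex_of_real (x powr s\<^sub>0)" for x
    by (simp only: of_real_mult[symmetric])
  then have fun_eq: "(\<lambda>x. (f x - of_real (sin \<delta>) * of_real (phi0 \<alpha> \<beta> \<gamma> x)) / of_real (phi1 \<alpha> \<beta> \<gamma> x))
      = (\<lambda>x. (f x - of_real A * of_real (x powr s\<^sub>0)) / of_real (x powr s\<^sub>1) * of_real (1 - \<beta>))"
    unfolding phi_eq(2) by (simp add: fun_eq_iff)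
  have "B * (1 - \<beta>) = - cos \<delta>"
    using \<open>1 - \<beta> \<noteq> 0\<close> by (simp add: B_def)
  then have "of_real B * of_real (1 - \<beta>) = - complex_of_real (cos \<delta>)"
    by (simp only: of_real_mult[symmetric] of_real_minus)
  then show "((\<lambda>x. (f x - of_real (sin \<delta>) * of_real (phi0 \<alpha> \<beta> \<gamma> x)) / of_real (phi1 \<alpha> \<beta> \<gamma> x))
      \<longlongrightarrow> - of_real (cos \<delta>)) (at_right 0)"
    unfolding fun_eq using tendsto_mult[OF f_remainder_asymp tendsto_const, of "of_real (1 - \<beta>)"] by simp
qed

lemma exponent_L2: "\<alpha> + 2 * s\<^sub>0 > -1"
  using \<nu>_less_m frob_params(3) unfolding m_def by linarith

lemma L2w_f: "L2w \<alpha> f"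
  by (rule L2w_if_asymp_at_0[OF continuous_on_f(1) _ f_asymp exponent_L2]) (use f_vanishes in blast)

lemma L2w_tau_f: "L2w \<alpha> (tau \<alpha> \<beta> \<gamma> f k)"
proof (rule L2w_if_asymp_at_0[OF _ _ _ exponent_L2])
  show "continuous_on {0<..} (tau \<alpha> \<beta> \<gamma> f k)"
    unfolding tau_def[abs_def] by (intro continuous_intros continuous_on_f) auto
  show "tau \<alpha> \<beta> \<gamma> f k x = 0" if "x \<ge> 2" for x
    using f_vanishes[OF that] by (simp add: tau_def)
  show "((\<lambda>x. tau \<alpha> \<beta> \<gamma> f k x / of_real (x powr s\<^sub>0)) \<longlongrightarrow> \<i> * of_real A) (at_right 0)"
  proof (rule Lim_transform_eventually[OF tendsto_mult[OF tendsto_const f_asymp]])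
    show "\<forall>\<^sub>F x in at_right 0. \<i> * (f x / of_real (x powr s\<^sub>0)) = tau \<alpha> \<beta> \<gamma> f k x / of_real (x powr s\<^sub>0)"
      unfolding eventually_at_right_field by (intro exI[of _ 1]) (simp add: tau_f_near_0)
  qed
qed

lemma g_vanishes: "x \<notin> {1<..<2} \<Longrightarrow> g x = 0"
  unfolding g_def using tau_f_near_0[of x] f_vanishes[of x] by (auto simp: tau_def)

lemma L2w_g: "L2w \<alpha> g"
proof (rule L2w_if_asymp_at_0[where b = 2 and p = 0 and L = 0])
  have "continuous_on {0<..} (\<lambda>x. tau \<alpha> \<beta> \<gamma> f k x - \<i> * f x)"
    unfolding tau_def[abs_def] by (intro continuous_intros continuous_on_f) auto
  then show "continuous_on {0<..} g"
    by (rule continuous_on_eq) (simp add: g_def)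
  show "((\<lambda>x. g x / of_real (x powr 0)) \<longlongrightarrow> 0) (at_right 0)"
    by (rule Lim_transform_eventually[OF tendsto_const])
       (auto simp: eventually_at_right_field g_vanishes intro!: exI[of _ 1])
qed (use alpha g_vanishes in auto)

lemma f_in_domain: "ddelta \<alpha> \<beta> \<gamma> \<delta> f f' k"
  unfolding ddelta_def dmax_def
proof (intro conjI exI)
  show "ACloc f f'"
    by (rule ACloc_if_has_vector_derivative[OF f_has_vector_derivative continuous_on_f(2)])
  show "ACloc (\<lambda>x. of_real (x powr \<beta>) * f' x) k"
    by (rule ACloc_if_has_vector_derivative[OF quasi_derivative_f continuous_on_f(3)])
  show "complex_of_real (sin \<delta>) * - of_real (cos \<delta>) + of_real (cos \<delta>) * of_real (sin \<delta>) = 0"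
    by simp
qed (fact L2w_f L2w_tau_f boundary_condition)+

lemma energies_diverge:
  "((\<lambda>\<epsilon>. \<integral>\<^sup>+ x\<in>{\<epsilon><..}. ennreal (x powr \<beta> * (cmod (f' x))\<^sup>2) \<partial>lborel) \<longlongrightarrow> \<infinity>) (at_right 0)"
  "((\<lambda>\<epsilon>. \<integral>\<^sup>+ x\<in>{\<epsilon><..}. ennreal (x powr (\<beta> - 2) * (cmod (f x))\<^sup>2) \<partial>lborel) \<longlongrightarrow> \<infinity>) (at_right 0)"
proof -
  have exponents: "\<beta> + 2 * (s\<^sub>0 - 1) < -1" "\<beta> - 2 + 2 * s\<^sub>0 < -1"
    using \<nu>_pos frob_params(3) by (simp_all add: algebra_simps)
  have limits_nonzero: "complex_of_real (A * s\<^sub>0) \<noteq> 0" "complex_of_real A \<noteq> 0"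
    using A_nonzero s\<^sub>0_nonzero by simp_all
  show "((\<lambda>\<epsilon>. \<integral>\<^sup>+ x\<in>{\<epsilon><..}. ennreal (x powr \<beta> * (cmod (f' x))\<^sup>2) \<partial>lborel) \<longlongrightarrow> \<infinity>) (at_right 0)"
    by (rule nn_integral_tail_tendsto_infinity[OF f'_asymp limits_nonzero(1) exponents(1)])
  show "((\<lambda>\<epsilon>. \<integral>\<^sup>+ x\<in>{\<epsilon><..}. ennreal (x powr (\<beta> - 2) * (cmod (f x))\<^sup>2) \<partial>lborel) \<longlongrightarrow> \<infinity>) (at_right 0)"
    by (rule nn_integral_tail_tendsto_infinity[OF f_asymp limits_nonzero(2) exponents(2)])
qed

end

theorem mainTheorem6:
  fixes \<alpha> \<beta> \<gamma> \<delta> :: real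
  assumes "\<alpha> > -1" and "\<beta> < 1" and "0 < \<gamma>" and "\<gamma> < 1"
    and "(2 + \<alpha> - \<beta>) * \<gamma> \<noteq> 1 - \<beta>"
    and "0 < \<delta>" and "\<delta> < pi"
  shows "\<exists>z g f f' k.
           Im z \<noteq> 0 \<and> L2w \<alpha> g \<and>
           (\<exists>a b. 0 < a \<and> a \<le> b \<and> (\<forall>x. x \<notin> {a..b} \<longrightarrow> g x = 0)) \<and>
           ddelta \<alpha> \<beta> \<gamma> \<delta> f f' k \<and>
           (AE x in lborel. x > 0 \<longrightarrow> tau \<alpha> \<beta> \<gamma> f k x - z * f x = g x) \<and>
           ((\<lambda>\<epsilon>. \<integral>\<^sup>+ x\<in>{\<epsilon><..}. ennreal (x powr \<beta> * (cmod (f' x))\<^sup>2) \<partial>lborel)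
              \<longlongrightarrow> \<infinity>) (at_right 0) \<and>
           ((\<lambda>\<epsilon>. \<integral>\<^sup>+ x\<in>{\<epsilon><..}. ennreal (x powr (\<beta> - 2) * (cmod (f x))\<^sup>2) \<partial>lborel)
              \<longlongrightarrow> \<infinity>) (at_right 0)"
proof -
  interpret divergent_energy_example \<alpha> \<beta> \<gamma> \<delta>
    using assms by unfold_locales
  have "\<exists>a b. 0 < a \<and> a \<le> b \<and> (\<forall>x. x \<notin> {a..b} \<longrightarrow> g x = 0)"
    using g_vanishes by (intro exI[of _ 1] exI[of _ 2]) auto
  moreover have "AE x in lborel. x > 0 \<longrightarrow> tau \<alpha> \<beta> \<gamma> f k x - \<i> * f x = g x"
    by (simp add: g_def)
  ultimately show ?thesis
    using L2w_g f_in_domain energies_diverge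
    by (rule_tac exI[of _ \<i>], rule_tac exI[of _ g], rule_tac exI[of _ f], rule_tac exI[of _ f'], rule_tac exI[of _ k])
       auto
qed

end
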